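(* If $\mathcal{F}:\mathcal{T}^Y\to\mathcal{T}^Z$ is a cover between trees of spheres, then the underlying map $F:T^Y\to T^Z$ is surjective (on vertices and edges).
   Context: Trees are finite connected graphs without cycles (vertex set $V$, edges $2$-element subsets of $V$, $E_v$ the set of edges containing $v$), regarded as the set $V\sqcup E$; leaves are vertices of valence $1$, the others are internal vertices ($IV$). A tree of spheres $\mathcal{T}^X$ marked by a finite set $X$ ($\ge3$ elements) consists of a tree $T^X$ whose leaf set is $X$ and, for each internal vertex $v$, a topological $2$-sphere $\mathcal{S}_v$ and an injection $i_v:E_v\to\mathcal{S}_v$; $X_v:=i_v(E_v)$. A cover $\mathcal{F}:\mathcal{T}^Y\to\mathcal{T}^Z$ consists of a map $F:T^Y\to T^Z$ sending vertices to vertices and each edge $\{v,w\}$ to the edge $\{F(v),F(w)\}$, with $F(Y)\subseteq Z$ and $F(IV^Y)\subseteq IV^Z$, and for each $v\in IV^Y$, $w=F(v)$, a topological branched covering $f_v:\mathcal{S}_v\to\mathcal{S}_w$ such that $f_v:\mathcal{S}_v\setminus Y_v\to\mathcal{S}_w\setminus Z_w$ is a covering map, $f_v\circ i_v=i_w\circ F$ on $E_v$, and for an edge $e=\{v_1,v_2\}$ between internal vertices $\deg_{i_{v_1}(e)}f_{v_1}=\deg_{i_{v_2}(e)}f_{v_2}$. *)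

theory Defs
  imports "HOL-Analysis.Analysis"
begin

definition adj :: "'v set set \<Rightarrow> ('v \<times> 'v) set" where
  "adj E = {(a, b). {a, b} \<in> E}"

definition has_cycle :: "'v set set \<Rightarrow> bool" where
  "has_cycle E \<longleftrightarrow> (\<exists>cs. length cs \<ge> 3 \<and> distinct cs \<and>
      (\<forall>k < length cs. {cs ! k, cs ! ((k + 1) mod length cs)} \<in> E))"

definition is_tree :: "'v set \<Rightarrow> 'v set set \<Rightarrow> bool" where
  "is_tree V E \<longleftrightarrow> finite V \<and> V \<noteq> {} \<and>
     (\<forall>e\<in>E. e \<subseteq> V \<and> card e = 2) \<and>
     (\<forall>u\<in>V. \<forall>w\<in>V. (u, w) \<in> (adj E)\<^sup>*) \<and>
     \<not> has_cycle E"

definition edges_at :: "'v set set \<Rightarrow> 'v \<Rightarrow> 'v set set" where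
  "edges_at E v = {e \<in> E. v \<in> e}"

definition leaves :: "'v set \<Rightarrow> 'v set set \<Rightarrow> 'v set" where
  "leaves V E = {v \<in> V. card (edges_at E v) = 1}"

definition internal_vertices :: "'v set \<Rightarrow> 'v set set \<Rightarrow> 'v set" where
  "internal_vertices V E = V - leaves V E"

definition tree_of_spheres ::
  "'v set \<Rightarrow> 'v set set \<Rightarrow> 'v set \<Rightarrow> ('v \<Rightarrow> 'p::topological_space set)
     \<Rightarrow> ('v \<Rightarrow> 'v set \<Rightarrow> 'p) \<Rightarrow> bool" where
  "tree_of_spheres V E X S i \<longleftrightarrow>
     is_tree V E \<and> leaves V E = X \<and> finite X \<and> card X \<ge> 3 \<and>
     (\<forall>v \<in> internal_vertices V E.
        S v homeomorphic (sphere (0::real^3) 1) \<and>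
        inj_on (i v) (edges_at E v) \<and> i v ` edges_at E v \<subseteq> S v)"

definition marked_points :: "'v set set \<Rightarrow> ('v \<Rightarrow> 'v set \<Rightarrow> 'p) \<Rightarrow> 'v \<Rightarrow> 'p set" where
  "marked_points E i v = i v ` edges_at E v"

definition has_local_degree ::
  "'a::topological_space set \<Rightarrow> 'b::topological_space set \<Rightarrow> ('a \<Rightarrow> 'b) \<Rightarrow> 'a \<Rightarrow> nat \<Rightarrow> bool" where
  "has_local_degree A B f x d \<longleftrightarrow> d \<ge> 1 \<and>
     (\<exists>U W \<phi> \<phi>' \<psi> \<psi>'. openin (top_of_set A) U \<and> x \<in> U \<and>
        openin (top_of_set B) W \<and> f ` U \<subseteq> W \<and>
        homeomorphism U (ball (0::complex) 1) \<phi> \<phi>' \<and> \<phi> x = 0 \<and>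
        homeomorphism W (ball (0::complex) 1) \<psi> \<psi>' \<and> \<psi> (f x) = 0 \<and>
        (\<forall>y\<in>U. \<psi> (f y) = (\<phi> y) ^ d))"

definition local_degree ::
  "'a::topological_space set \<Rightarrow> 'b::topological_space set \<Rightarrow> ('a \<Rightarrow> 'b) \<Rightarrow> 'a \<Rightarrow> nat" where
  "local_degree A B f x = (THE d. has_local_degree A B f x d)"

definition branched_covering ::
  "'a::topological_space set \<Rightarrow> 'b::topological_space set \<Rightarrow> ('a \<Rightarrow> 'b) \<Rightarrow> bool" where
  "branched_covering A B f \<longleftrightarrow> continuous_on A f \<and> f ` A = B \<and>
     (\<forall>x\<in>A. \<exists>d. has_local_degree A B f x d)"

definition tree_cover ::
  "'v set \<Rightarrow> 'v set set \<Rightarrow> 'v set \<Rightarrow> ('v \<Rightarrow> 'p::topological_space set) \<Rightarrow> ('v \<Rightarrow> 'v set \<Rightarrow> 'p)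
   \<Rightarrow> 'w set \<Rightarrow> 'w set set \<Rightarrow> 'w set \<Rightarrow> ('w \<Rightarrow> 'q::topological_space set) \<Rightarrow> ('w \<Rightarrow> 'w set \<Rightarrow> 'q)
   \<Rightarrow> ('v \<Rightarrow> 'w) \<Rightarrow> ('v \<Rightarrow> 'p \<Rightarrow> 'q) \<Rightarrow> bool" where
  "tree_cover VY EY Y SY iY VZ EZ Z SZ iZ F f \<longleftrightarrow>
     tree_of_spheres VY EY Y SY iY \<and> tree_of_spheres VZ EZ Z SZ iZ \<and>
     F ` VY \<subseteq> VZ \<and>
     (\<forall>v w. {v, w} \<in> EY \<longrightarrow> {F v, F w} \<in> EZ) \<and>
     F ` Y \<subseteq> Z \<and>
     F ` internal_vertices VY EY \<subseteq> internal_vertices VZ EZ \<and>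
     (\<forall>v \<in> internal_vertices VY EY.
        branched_covering (SY v) (SZ (F v)) (f v) \<and>
        covering_space (SY v - marked_points EY iY v) (f v)
                       (SZ (F v) - marked_points EZ iZ (F v)) \<and>
        (\<forall>e \<in> edges_at EY v. f v (iY v e) = iZ (F v) (F ` e))) \<and>
     (\<forall>v1 v2. {v1, v2} \<in> EY \<longrightarrow> v1 \<in> internal_vertices VY EY \<longrightarrow>
        v2 \<in> internal_vertices VY EY \<longrightarrow>
        local_degree (SY v1) (SZ (F v1)) (f v1) (iY v1 {v1, v2}) =
        local_degree (SY v2) (SZ (F v2)) (f v2) (iY v2 {v1, v2}))"

end

theory Submission
  imports Defs
begin

text \<open>A cover lifts edges: every edge of \<open>T\<^sup>Z\<close> at \<open>F v\<close> is the image of an edge of \<open>T\<^sup>Y\<close>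
  at \<open>v\<close>. At a leaf \<open>v\<close> this holds because \<open>F v\<close> is a leaf, so it has a single edge. At an
  internal vertex, the marked point of the edge on \<open>\<S>\<^sub>F\<^sub>(\<^sub>v\<^sub>)\<close> has a preimage under the surjection
  \<open>f\<^sub>v\<close>, which must be marked since \<open>f\<^sub>v\<close> restricts to a covering of the unmarked parts;
  injectivity of the marking identifies its edge. Lifting edges turns the image of
  \<open>F\<close> into a subset of the connected tree \<open>T\<^sup>Z\<close> that is closed under adjacency, hence all
  of it, and then every edge of \<open>T\<^sup>Z\<close> lifts at a preimage of one of its endpoints.\<close>

lemma card_2_obtain_other:
  assumes "card e = 2" and "v \<in> e"
  obtains u where "u \<noteq> v" and "e = {v, u}"
  using assms unfolding card_2_iff by (metis empty_iff insert_commute insert_iff)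

lemma covering_space_preimage_of_removed:
  assumes "covering_space (A - MA) p (B - MB)" and "x \<in> A" and "p x \<in> MB"
  shows "x \<in> MA"
  using assms covering_space_imp_surjective by fastforce

lemma tree_of_spheresD:
  assumes "tree_of_spheres V E X S i"
  shows "\<And>e. e \<in> E \<Longrightarrow> e \<subseteq> V" and "\<And>e. e \<in> E \<Longrightarrow> card e = 2"
    and "\<forall>u\<in>V. \<forall>w\<in>V. (u, w) \<in> (adj E)\<^sup>*" and "V \<noteq> {}" and "leaves V E = X"
    and "\<And>v. v \<in> internal_vertices V E \<Longrightarrow> inj_on (i v) (edges_at E v)"
    and "\<And>v. v \<in> internal_vertices V E \<Longrightarrow> i v ` edges_at E v \<subseteq> S v"
  using assms unfolding tree_of_spheres_def is_tree_def by blast+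

lemma tree_coverD:
  assumes "tree_cover VY EY Y SY iY VZ EZ Z SZ iZ F f"
  shows "tree_of_spheres VY EY Y SY iY" and "tree_of_spheres VZ EZ Z SZ iZ"
    and "F ` VY \<subseteq> VZ" and "\<And>v w. {v, w} \<in> EY \<Longrightarrow> {F v, F w} \<in> EZ"
    and "F ` Y \<subseteq> Z" and "F ` internal_vertices VY EY \<subseteq> internal_vertices VZ EZ"
    and "\<And>v. v \<in> internal_vertices VY EY \<Longrightarrow> branched_covering (SY v) (SZ (F v)) (f v)"
    and "\<And>v. v \<in> internal_vertices VY EY \<Longrightarrow>
        covering_space (SY v - marked_points EY iY v) (f v) (SZ (F v) - marked_points EZ iZ (F v))"
    and "\<And>v e. v \<in> internal_vertices VY EY \<Longrightarrow> e \<in> edges_at EY v \<Longrightarrow>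
        f v (iY v e) = iZ (F v) (F ` e)"
  using assms unfolding tree_cover_def by blast+

lemma tree_cover_image_edge:
  assumes C: "tree_cover VY EY Y SY iY VZ EZ Z SZ iZ F f" and e: "e \<in> EY"
  shows "F ` e \<in> EZ"
proof -
  obtain a b where "e = {a, b}"
    using tree_of_spheresD(2)[OF tree_coverD(1)[OF C] e] unfolding card_2_iff by blast
  then show ?thesis using tree_coverD(4)[OF C] e by simp
qed

lemma tree_cover_lift_edge_at_leaf:
  assumes C: "tree_cover VY EY Y SY iY VZ EZ Z SZ iZ F f"
    and v: "v \<in> Y" and e': "e' \<in> edges_at EZ (F v)"
  shows "\<exists>e \<in> edges_at EY v. F ` e = e'"
proof -
  have "v \<in> leaves VY EY"
    using v tree_of_spheresD(5)[OF tree_coverD(1)[OF C]] by simp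
  moreover have "F v \<in> leaves VZ EZ"
    using v tree_coverD(5)[OF C] tree_of_spheresD(5)[OF tree_coverD(2)[OF C]] by blast
  ultimately have "card (edges_at EY v) = 1" and "card (edges_at EZ (F v)) = 1"
    unfolding leaves_def by auto
  then obtain e z where e: "edges_at EY v = {e}" and z: "edges_at EZ (F v) = {z}"
    by (meson card_1_singletonE)
  have "e \<in> EY" and "v \<in> e" using e unfolding edges_at_def by blast+
  then have "F ` e \<in> edges_at EZ (F v)"
    using tree_cover_image_edge[OF C] unfolding edges_at_def by blast
  then show ?thesis using e z e' by auto
qed

lemma tree_cover_lift_edge_at_internal:
  assumes C: "tree_cover VY EY Y SY iY VZ EZ Z SZ iZ F f"
    and v: "v \<in> internal_vertices VY EY" and e': "e' \<in> edges_at EZ (F v)"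
  shows "\<exists>e \<in> edges_at EY v. F ` e = e'"
proof -
  have w: "F v \<in> internal_vertices VZ EZ" using tree_coverD(6)[OF C] v by blast
  note TZ = tree_coverD(2)[OF C]
  obtain x where x: "x \<in> SY v" "f v x = iZ (F v) e'"
    using tree_of_spheresD(7)[OF TZ w] e' tree_coverD(7)[OF C v]
    unfolding branched_covering_def by (metis image_iff image_subset_iff)
  have "f v x \<in> marked_points EZ iZ (F v)"
    using x e' unfolding marked_points_def by auto
  then have "x \<in> marked_points EY iY v"
    using covering_space_preimage_of_removed[OF tree_coverD(8)[OF C v] x(1)] by blast
  then obtain e where e: "e \<in> edges_at EY v" and "x = iY v e"
    unfolding marked_points_def by auto
  then have "iZ (F v) (F ` e) = iZ (F v) e'" using tree_coverD(9)[OF C v] x by auto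
  moreover have "F ` e \<in> edges_at EZ (F v)"
    using e tree_cover_image_edge[OF C] unfolding edges_at_def by auto
  ultimately have "F ` e = e'" using tree_of_spheresD(6)[OF TZ w] e' by (meson inj_onD)
  then show ?thesis using e by blast
qed

lemma tree_cover_lift_edge:
  assumes C: "tree_cover VY EY Y SY iY VZ EZ Z SZ iZ F f"
    and v: "v \<in> VY" and e': "e' \<in> edges_at EZ (F v)"
  shows "\<exists>e \<in> edges_at EY v. F ` e = e'"
proof (cases "v \<in> Y")
  case True
  then show ?thesis by (rule tree_cover_lift_edge_at_leaf[OF C _ e'])
next
  case False
  with v have "v \<in> internal_vertices VY EY"
    unfolding internal_vertices_def tree_of_spheresD(5)[OF tree_coverD(1)[OF C]] by simp
  then show ?thesis by (rule tree_cover_lift_edge_at_internal[OF C _ e'])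
qed

lemma tree_cover_image_closed_under_adj:
  assumes C: "tree_cover VY EY Y SY iY VZ EZ Z SZ iZ F f"
  shows "adj EZ `` (F ` VY) \<subseteq> F ` VY"
proof
  note TY = tree_coverD(1)[OF C] and TZ = tree_coverD(2)[OF C]
  fix c assume "c \<in> adj EZ `` (F ` VY)"
  then obtain v where v: "v \<in> VY" and bc: "{F v, c} \<in> EZ"
    unfolding adj_def by auto
  then obtain e where e: "e \<in> EY" "v \<in> e" and Fe: "F ` e = {F v, c}"
    using tree_cover_lift_edge[OF C v, of "{F v, c}"] unfolding edges_at_def by auto
  obtain u where u: "u \<noteq> v" "e = {v, u}"
    using tree_of_spheresD(2)[OF TY e(1)] e(2) by (rule card_2_obtain_other)
  have "F v \<noteq> c" using tree_of_spheresD(2)[OF TZ bc] by auto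
  then have "F u = c" using Fe u by (auto simp: doubleton_eq_iff)
  moreover have "u \<in> VY" using tree_of_spheresD(1)[OF TY e(1)] u by auto
  ultimately show "c \<in> F ` VY" by blast
qed

lemma tree_cover_surj_vertices:
  assumes C: "tree_cover VY EY Y SY iY VZ EZ Z SZ iZ F f"
  shows "F ` VY = VZ"
proof
  show sub: "F ` VY \<subseteq> VZ" using tree_coverD(3)[OF C] .
  obtain v where "v \<in> VY" using tree_of_spheresD(4)[OF tree_coverD(1)[OF C]] by blast
  then have "VZ \<subseteq> (adj EZ)\<^sup>* `` (F ` VY)"
    using sub tree_of_spheresD(3)[OF tree_coverD(2)[OF C]] by blast
  also have "\<dots> = F ` VY"
    using Image_closed_trancl[OF tree_cover_image_closed_under_adj[OF C]] .
  finally show "VZ \<subseteq> F ` VY" .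
qed

lemma tree_cover_surj_edges:
  assumes C: "tree_cover VY EY Y SY iY VZ EZ Z SZ iZ F f"
  shows "(\<lambda>e. F ` e) ` EY = EZ"
proof
  show "(\<lambda>e. F ` e) ` EY \<subseteq> EZ" using tree_cover_image_edge[OF C] by blast
  show "EZ \<subseteq> (\<lambda>e. F ` e) ` EY"
  proof
    note TZ = tree_coverD(2)[OF C]
    fix e' assume e': "e' \<in> EZ"
    obtain a where a: "a \<in> e'"
      using tree_of_spheresD(2)[OF TZ e'] by (auto simp: card_2_iff)
    then have "a \<in> F ` VY"
      using tree_of_spheresD(1)[OF TZ e'] tree_cover_surj_vertices[OF C] by auto
    then obtain v where "v \<in> VY" "F v = a" by blast
    then show "e' \<in> (\<lambda>e. F ` e) ` EY"
      using tree_cover_lift_edge[OF C, of v e'] e' a unfolding edges_at_def by auto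
  qed
qed

theorem corollary2p20:
  fixes VY :: "'v set" and EY :: "'v set set" and Y :: "'v set"
    and SY :: "'v \<Rightarrow> 'p::topological_space set" and iY :: "'v \<Rightarrow> 'v set \<Rightarrow> 'p"
    and VZ :: "'w set" and EZ :: "'w set set" and Z :: "'w set"
    and SZ :: "'w \<Rightarrow> 'q::topological_space set" and iZ :: "'w \<Rightarrow> 'w set \<Rightarrow> 'q"
    and F :: "'v \<Rightarrow> 'w" and f :: "'v \<Rightarrow> 'p \<Rightarrow> 'q"
  assumes "tree_cover VY EY Y SY iY VZ EZ Z SZ iZ F f"
  shows "F ` VY = VZ \<and> (\<lambda>e. F ` e) ` EY = EZ"
  using tree_cover_surj_vertices[OF assms] tree_cover_surj_edges[OF assms] by blast

end
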